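(* Let $N>0$ and $\tau\in(0,1)$. Then: (i) The following are equivalent: $\beta_1^{**}(\tau)=4(N+1)$; [$\underline\beta_1(\tau)=4(N+1)$ and $\beta_2^*(\tau)=\overline\beta_2(\tau)$]; $\tau=\tau_0^{(1)}$. In particular $\beta_1^{**}(\tau)-\tau\beta_2^*(\tau)=2(N+1)$ if and only if $\tau=\tau_0^{(1)}$. (ii) The following are equivalent: $\beta_2^{**}(\tau)=4$; [$\underline\beta_2(\tau)=4$ and $\beta_1^*(\tau)=\overline\beta_1(\tau)$]; $\tau=\tau_0^{(2)}$. In particular $\beta_2^{**}(\tau)-\tau\beta_1^*(\tau)=2$ if and only if $\tau=\tau_0^{(2)}$. Moreover $0<\tau_0^{(2)}<\tau_0^{(1)}<\frac12$.
   Context: With $D=(N+1)^2+2\tau(N+1)+1$: $$\underline\beta_1(\tau)=\tfrac{2}{1-\tau^2}(N+1+\tau+\tau\sqrt D),\qquad \overline\beta_1(\tau)=\tfrac{2}{1-\tau^2}(N+1+\tau+\sqrt D),$$ $$\underline\beta_2(\tau)=\tfrac{2}{1-\tau^2}(1+\tau(N+1)+\tau\sqrt D),\qquad \overline\beta_2(\tau)=\tfrac{2}{1-\tau^2}(1+\tau(N+1)+\sqrt D);$$ $$\beta_1^*(\tau)=4(N+1)+8\tau,\quad \beta_2^*(\tau)=4+8\tau(N+1),\quad \beta_1^{**}(\tau)=2\tau\beta_2^*(\tau)=8\tau(1+2\tau(N+1)),\quad \beta_2^{**}(\tau)=2\tau\beta_1^*(\tau)=8\tau(N+1+2\tau);$$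 $$\tau_0^{(1)}=\frac{N+1}{1+\sqrt{1+4(N+1)^2}},\qquad \tau_0^{(2)}=\frac{1}{N+1+\sqrt{(N+1)^2+4}}.$$ *)

theory Defs
  imports Complex_Main
begin

definition DD :: "nat \<Rightarrow> real \<Rightarrow> real" where
  "DD N \<tau> = (real N + 1)^2 + 2*\<tau>*(real N + 1) + 1"

definition beta1_low :: "nat \<Rightarrow> real \<Rightarrow> real" where
  "beta1_low N \<tau> = 2/(1-\<tau>^2) * (real N + 1 + \<tau> + \<tau> * sqrt (DD N \<tau>))"
definition beta1_up :: "nat \<Rightarrow> real \<Rightarrow> real" where
  "beta1_up N \<tau> = 2/(1-\<tau>^2) * (real N + 1 + \<tau> + sqrt (DD N \<tau>))"
definition beta2_low :: "nat \<Rightarrow> real \<Rightarrow> real" where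
  "beta2_low N \<tau> = 2/(1-\<tau>^2) * (1 + \<tau>*(real N + 1) + \<tau> * sqrt (DD N \<tau>))"
definition beta2_up :: "nat \<Rightarrow> real \<Rightarrow> real" where
  "beta2_up N \<tau> = 2/(1-\<tau>^2) * (1 + \<tau>*(real N + 1) + sqrt (DD N \<tau>))"

definition beta1_star :: "nat \<Rightarrow> real \<Rightarrow> real" where
  "beta1_star N \<tau> = 4*(real N + 1) + 8*\<tau>"
definition beta2_star :: "nat \<Rightarrow> real \<Rightarrow> real" where
  "beta2_star N \<tau> = 4 + 8*\<tau>*(real N + 1)"
definition beta1_sstar :: "nat \<Rightarrow> real \<Rightarrow> real" where
  "beta1_sstar N \<tau> = 2*\<tau>*beta2_star N \<tau>"
definition beta2_sstar :: "nat \<Rightarrow> real \<Rightarrow> real" where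
  "beta2_sstar N \<tau> = 2*\<tau>*beta1_star N \<tau>"

definition tau0_1 :: "nat \<Rightarrow> real" where
  "tau0_1 N = (real N + 1) / (1 + sqrt (1 + 4*(real N + 1)^2))"
definition tau0_2 :: "nat \<Rightarrow> real" where
  "tau0_2 N = 1 / (real N + 1 + sqrt ((real N + 1)^2 + 4))"

end

theory Submission
  imports Defs
begin

text \<open>With \<open>M = N + 1\<close> and \<open>s = sqrt (DD N \<tau>)\<close>, both parts are the same statement about the
  quadratic \<open>4 a t\<^sup>2 + 2 b t - a\<close>, once for \<open>(a, b) = (M, 1)\<close> and once for \<open>(a, b) = (1, M)\<close>;
  note that \<open>s\<^sup>2 = a\<^sup>2 + 2 t a b + b\<^sup>2\<close> in both cases. The conditions on the starred betas are
  this quadratic equation after clearing a factor. The pair of boundary conditions forces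
  \<open>t s = a / 2\<close>, and then it also reduces to the quadratic. Its only positive root is
  \<open>a / (b + sqrt (b\<^sup>2 + 4 a\<^sup>2))\<close>, which is exactly \<open>\<tau>\<^sub>0\<close>.\<close>

lemma quadratic_pos_root_iff:
  fixes a b t :: real
  assumes "a > 0" "b \<ge> 0" "t > 0"
  shows "4*a*t^2 + 2*b*t - a = 0 \<longleftrightarrow> t = a / (b + sqrt (b^2 + 4*a^2))"
proof -
  define r where "r = sqrt (b^2 + 4*a^2)"
  define x where "x = a / (b + r)"
  have r2: "r^2 = b^2 + 4*a^2" unfolding r_def by simp
  have "r > 0" unfolding r_def using assms by (simp add: add_nonneg_pos)
  with assms have "b + r > 0" by simp
  then have x_pos: "x > 0" and x_scaled: "x * (b + r) = a"
    unfolding x_def using assms by simp_all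
  have "(b + r)^2 * (4*a*x^2 + 2*b*x - a)
        = 4*a*(x*(b + r))^2 + 2*b*(x*(b + r))*(b + r) - a*(b + r)^2"
    by (simp add: algebra_simps power2_eq_square)
  also have "\<dots> = a * (4*a^2 + b^2 - r^2)"
    unfolding x_scaled by (simp add: algebra_simps power2_eq_square)
  finally have x_root: "4*a*x^2 + 2*b*x - a = 0"
    using r2 \<open>b + r > 0\<close> by simp
  have "4*a*t^2 + 2*b*t - a - (4*a*x^2 + 2*b*x - a) = (t - x) * (4*a*(t + x) + 2*b)"
    by (simp add: algebra_simps power2_eq_square)
  moreover have "4*a*(t + x) + 2*b > 0"
    using assms x_pos by (simp add: add_pos_nonneg)
  ultimately have "4*a*t^2 + 2*b*t - a = 0 \<longleftrightarrow> t = x"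
    using x_root by auto
  then show ?thesis unfolding x_def r_def .
qed

text \<open>The left-hand side is the pair of boundary conditions with \<open>2 / (1 - t\<^sup>2)\<close> cleared.\<close>

lemma boundary_pair_iff_quadratic:
  fixes a b t s :: real
  assumes "a > 0" "0 < t" "t < 1" "s \<ge> 0" "s^2 = a^2 + 2*t*a*b + b^2"
  shows "(a + t*b + t*s = 2*a*(1 - t^2) \<and> (2*b + 4*t*a)*(1 - t^2) = b + t*a + s)
         \<longleftrightarrow> 4*a*t^2 + 2*b*t - a = 0"
proof
  assume "a + t*b + t*s = 2*a*(1 - t^2) \<and> (2*b + 4*t*a)*(1 - t^2) = b + t*a + s"
  then have "t*((2*b + 4*t*a)*(1 - t^2) - b - t*a) = 2*a*(1 - t^2) - a - t*b"
    by (simp add: algebra_simps)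
  then have "(1 - t^2) * (4*a*t^2 + 2*b*t - a) = 0"
    by (simp add: algebra_simps power2_eq_square power3_eq_cube)
  moreover have "1 - t^2 \<noteq> 0"
    using assms(2,3) power_strict_mono[of t 1 2] by simp
  ultimately show "4*a*t^2 + 2*b*t - a = 0" by simp
next
  assume q: "4*a*t^2 + 2*b*t - a = 0"
  have "(t*s)^2 - (a/2)^2 = t^2*(a^2 + 2*t*a*b + b^2) - (a/2)^2"
    using assms(5) by (simp add: power_mult_distrib)
  also have "\<dots> = (4*a*t^2 + 2*b*t - a) * (b*t/2 + a/4)"
    by (simp add: algebra_simps power2_eq_square power3_eq_cube)
  finally have "(t*s)^2 - (a/2)^2 = (4*a*t^2 + 2*b*t - a) * (b*t/2 + a/4)" .
  then have "(t*s)^2 = (a/2)^2" using q by simp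
  then have ts: "t*s = a/2"
    using assms by (simp add: power2_eq_iff_nonneg)
  have low: "a + t*b + t*s = 2*a*(1 - t^2)"
    using ts q by (simp add: algebra_simps power2_eq_square)
  have "t*((2*b + 4*t*a)*(1 - t^2)) - t*(b + t*a + s) = (4*a*t^2 + 2*b*t - a)*(1/2 - t^2)"
    using ts by (simp add: algebra_simps power2_eq_square power3_eq_cube)
  then have "t*((2*b + 4*t*a)*(1 - t^2)) = t*(b + t*a + s)"
    using q by simp
  then have "(2*b + 4*t*a)*(1 - t^2) = b + t*a + s"
    using assms(2) by simp
  with low show "a + t*b + t*s = 2*a*(1 - t^2) \<and> (2*b + 4*t*a)*(1 - t^2) = b + t*a + s" ..
qed

lemma DD_nonneg: "\<tau> \<ge> 0 \<Longrightarrow> 0 \<le> DD N \<tau>"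
  unfolding DD_def by (simp add: add_nonneg_nonneg)

lemma sqrt_DD_sq:
  assumes "\<tau> \<ge> 0"
  shows "(sqrt (DD N \<tau>))^2 = (real N + 1)^2 + 2*\<tau>*(real N + 1) + 1"
  using DD_nonneg[OF assms] unfolding DD_def by simp

lemma beta1_sstar_eq_iff:
  "beta1_sstar N \<tau> = 4*(real N + 1) \<longleftrightarrow> 4*(real N + 1)*\<tau>^2 + 2*\<tau> - (real N + 1) = 0"
  unfolding beta1_sstar_def beta2_star_def by (auto simp: algebra_simps power2_eq_square)

lemma beta1_sstar_minus_eq_iff:
  "beta1_sstar N \<tau> - \<tau> * beta2_star N \<tau> = 2*(real N + 1)
   \<longleftrightarrow> 4*(real N + 1)*\<tau>^2 + 2*\<tau> - (real N + 1) = 0"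
  unfolding beta1_sstar_def beta2_star_def by (auto simp: algebra_simps power2_eq_square)

lemma beta2_sstar_eq_iff:
  "beta2_sstar N \<tau> = 4 \<longleftrightarrow> 4*\<tau>^2 + 2*(real N + 1)*\<tau> - 1 = 0"
  unfolding beta2_sstar_def beta1_star_def by (auto simp: algebra_simps power2_eq_square)

lemma beta2_sstar_minus_eq_iff:
  "beta2_sstar N \<tau> - \<tau> * beta1_star N \<tau> = 2 \<longleftrightarrow> 4*\<tau>^2 + 2*(real N + 1)*\<tau> - 1 = 0"
  unfolding beta2_sstar_def beta1_star_def by (auto simp: algebra_simps power2_eq_square)

lemma beta1_low_eq_iff:
  assumes "\<tau>^2 \<noteq> 1"
  shows "beta1_low N \<tau> = 4*(real N + 1)
         \<longleftrightarrow> real N + 1 + \<tau> + \<tau> * sqrt (DD N \<tau>) = 2*(real N + 1)*(1 - \<tau>^2)"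
  using assms unfolding beta1_low_def by (auto simp: field_simps)

lemma beta2_low_eq_iff:
  assumes "\<tau>^2 \<noteq> 1"
  shows "beta2_low N \<tau> = 4 \<longleftrightarrow> 1 + \<tau>*(real N + 1) + \<tau> * sqrt (DD N \<tau>) = 2*(1 - \<tau>^2)"
  using assms unfolding beta2_low_def by (auto simp: field_simps)

lemma beta1_star_eq_up_iff:
  assumes "\<tau>^2 \<noteq> 1"
  shows "beta1_star N \<tau> = beta1_up N \<tau>
         \<longleftrightarrow> (2*(real N + 1) + 4*\<tau>)*(1 - \<tau>^2) = real N + 1 + \<tau> + sqrt (DD N \<tau>)"
  using assms unfolding beta1_up_def beta1_star_def by (auto simp: field_simps)

lemma beta2_star_eq_up_iff:
  assumes "\<tau>^2 \<noteq> 1"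
  shows "beta2_star N \<tau> = beta2_up N \<tau>
         \<longleftrightarrow> (2 + 4*\<tau>*(real N + 1))*(1 - \<tau>^2) = 1 + \<tau>*(real N + 1) + sqrt (DD N \<tau>)"
  using assms unfolding beta2_up_def beta2_star_def by (auto simp: field_simps)

lemma tau0_2_pos: "0 < tau0_2 N"
  unfolding tau0_2_def by (simp add: add_pos_nonneg)

lemma tau0_1_less_half: "tau0_1 N < 1/2"
proof -
  have "2*(real N + 1) < sqrt (1 + 4*(real N + 1)^2)"
    by (rule real_less_rsqrt) (simp add: power2_eq_square algebra_simps)
  then show ?thesis unfolding tau0_1_def by (simp add: field_simps)
qed

text \<open>For \<open>N = 0\<close> the two values coincide, both being \<open>1 / (1 + sqrt 5)\<close>.\<close>

lemma tau0_2_less_tau0_1: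
  assumes "N > 0"
  shows "tau0_2 N < tau0_1 N"
proof -
  define M where "M = real N + 1"
  define r1 where "r1 = sqrt (1 + 4*M^2)"
  define r2 where "r2 = sqrt (M^2 + 4)"
  have M2: "M \<ge> 2" unfolding M_def using assms by simp
  have "r1 < 2*M + 1"
    unfolding r1_def using M2
    by (intro real_less_lsqrt) (simp_all add: power2_eq_square algebra_simps)
  then have "1 + r1 < 2*M + 2" by simp
  also have "\<dots> \<le> M*M + M*M" using M2 mult_right_mono[of 2 M M] by linarith
  also have "\<dots> < M*(M + r2)"
  proof -
    have "M < r2" unfolding r2_def by (rule real_less_rsqrt) simp
    then show ?thesis using M2 by (simp add: distrib_left)
  qed
  finally have "1 + r1 < M*(M + r2)" .
  moreover have "r1 \<ge> 0" "r2 \<ge> 0" unfolding r1_def r2_def by simp_all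
  ultimately show ?thesis
    unfolding tau0_1_def tau0_2_def M_def[symmetric] r1_def[symmetric] r2_def[symmetric]
    using M2 by (simp add: field_simps)
qed

theorem mainTheorem12:
  fixes N :: nat and \<tau> :: real
  assumes "N > 0" and "0 < \<tau>" and "\<tau> < 1"
  shows "((beta1_sstar N \<tau> = 4*(real N + 1)
            \<longleftrightarrow> (beta1_low N \<tau> = 4*(real N + 1) \<and> beta2_star N \<tau> = beta2_up N \<tau>))
        \<and> ((beta1_low N \<tau> = 4*(real N + 1) \<and> beta2_star N \<tau> = beta2_up N \<tau>)
            \<longleftrightarrow> \<tau> = tau0_1 N)
        \<and> (beta1_sstar N \<tau> - \<tau> * beta2_star N \<tau> = 2*(real N + 1) \<longleftrightarrow> \<tau> = tau0_1 N))
       \<and> ((beta2_sstar N \<tau> = 4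
            \<longleftrightarrow> (beta2_low N \<tau> = 4 \<and> beta1_star N \<tau> = beta1_up N \<tau>))
        \<and> ((beta2_low N \<tau> = 4 \<and> beta1_star N \<tau> = beta1_up N \<tau>)
            \<longleftrightarrow> \<tau> = tau0_2 N)
        \<and> (beta2_sstar N \<tau> - \<tau> * beta1_star N \<tau> = 2 \<longleftrightarrow> \<tau> = tau0_2 N))
       \<and> 0 < tau0_2 N \<and> tau0_2 N < tau0_1 N \<and> tau0_1 N < 1/2"
proof -
  define M where "M = real N + 1"
  have "M > 0" unfolding M_def by simp
  have "\<tau>^2 \<noteq> 1" using assms(2,3) power_strict_mono[of \<tau> 1 2] by simp
  have s: "sqrt (DD N \<tau>) \<ge> 0" "(sqrt (DD N \<tau>))^2 = M^2 + 2*\<tau>*M*1 + 1^2"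
    using sqrt_DD_sq[of \<tau> N] DD_nonneg[of \<tau> N] assms(2) unfolding M_def
    by (simp_all add: algebra_simps)
  have pair1: "(beta1_low N \<tau> = 4*(real N + 1) \<and> beta2_star N \<tau> = beta2_up N \<tau>)
      \<longleftrightarrow> 4*M*\<tau>^2 + 2*\<tau> - M = 0"
    using boundary_pair_iff_quadratic[OF \<open>M > 0\<close> assms(2,3) s]
    unfolding beta1_low_eq_iff[OF \<open>\<tau>^2 \<noteq> 1\<close>] beta2_star_eq_up_iff[OF \<open>\<tau>^2 \<noteq> 1\<close>] M_def
    by simp
  have pair2: "(beta2_low N \<tau> = 4 \<and> beta1_star N \<tau> = beta1_up N \<tau>)
      \<longleftrightarrow> 4*\<tau>^2 + 2*M*\<tau> - 1 = 0"
    using boundary_pair_iff_quadratic[of 1 \<tau> "sqrt (DD N \<tau>)" M] assms(2,3) s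
    unfolding beta2_low_eq_iff[OF \<open>\<tau>^2 \<noteq> 1\<close>] beta1_star_eq_up_iff[OF \<open>\<tau>^2 \<noteq> 1\<close>] M_def
    by (simp add: algebra_simps)
  have root1: "4*M*\<tau>^2 + 2*\<tau> - M = 0 \<longleftrightarrow> \<tau> = tau0_1 N"
    using quadratic_pos_root_iff[OF \<open>M > 0\<close>, of 1 \<tau>] assms(2) unfolding tau0_1_def M_def
    by simp
  have root2: "4*\<tau>^2 + 2*M*\<tau> - 1 = 0 \<longleftrightarrow> \<tau> = tau0_2 N"
    using quadratic_pos_root_iff[of 1 M \<tau>] \<open>M > 0\<close> assms(2) unfolding tau0_2_def M_def
    by (simp add: add.commute)
  show ?thesis
    using pair1 pair2 root1 root2 tau0_2_pos tau0_2_less_tau0_1[OF assms(1)] tau0_1_less_half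
      beta1_sstar_eq_iff beta1_sstar_minus_eq_iff beta2_sstar_eq_iff beta2_sstar_minus_eq_iff
    unfolding M_def by blast
qed

end
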